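(* Let $n\geq2$, $H=\{x\in\mathbb{R}^{n+1}:\sum_i x_i=0\}$, $p_H$ the orthogonal projection onto $H$, $V_0=\{0,1\}^{n+1}\setminus\{(0,\dots,0),(1,\dots,1)\}$, $V_{\mathcal{P}}=p_H(V_0)$ (the vertex set of the Voronoi region of $A_n=\mathbb{Z}^{n+1}\cap H$), and let $\tilde G$ be the Cayley graph on $\frac12p_H(\mathbb{Z}^{n+1})$ with generating set $\frac12V_{\mathcal{P}}$. Then the cliques of $\tilde G$ containing $0$ are exactly the sets of the form $\{0,\frac{p_H(u_1)}{2},\dots,\frac{p_H(u_s)}{2}\}$ with $u_1,\dots,u_s$ distinct elements of $V_0$ whose supports $I_i=\{j:(u_i)_j=1\}$ satisfy $I_1\subset I_2\subset\cdots\subset I_s$. In particular, a clique of $\tilde G$ contains at most $n+1$ vertices.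
   Context: In the Cayley graph, $x,y$ are adjacent iff $x-y\in\frac12V_{\mathcal{P}}$. A clique is a set of vertices any two distinct elements of which are adjacent. *)

theory Defs
  imports "HOL-Analysis.Analysis"
begin

text \<open>Ambient space R^{n+1} is rendered as real^'n with CARD('n) = n+1.\<close>

definition hyperH :: "(real^'n) set" where
  "hyperH = {x. (\<Sum>i\<in>UNIV. x $ i) = 0}"

definition pH :: "real^'n \<Rightarrow> real^'n" where
  "pH x = x - (\<chi> i. (\<Sum>j\<in>UNIV. x $ j) / real CARD('n))"

definition V0 :: "(real^'n) set" where
  "V0 = {u. \<forall>i. u $ i = 0 \<or> u $ i = 1} - {0, (\<chi> i. 1)}"

definition VP :: "(real^'n) set" where
  "VP = pH ` V0"

definition supp01 :: "real^'n \<Rightarrow> 'n set" where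
  "supp01 u = {j. u $ j = 1}"

definition cayley_vertices :: "(real^'n) set" where
  "cayley_vertices = (\<lambda>z. (1/2) *\<^sub>R pH z) ` {z. \<forall>i. z $ i \<in> \<int>}"

definition cayley_adj :: "real^'n \<Rightarrow> real^'n \<Rightarrow> bool" where
  "cayley_adj x y \<longleftrightarrow> x - y \<in> (\<lambda>v. (1/2) *\<^sub>R v) ` VP"

definition cayley_clique :: "(real^'n) set \<Rightarrow> bool" where
  "cayley_clique C \<longleftrightarrow> C \<subseteq> cayley_vertices \<and>
     (\<forall>x\<in>C. \<forall>y\<in>C. x \<noteq> y \<longrightarrow> cayley_adj x y)"

end

theory Submission
  imports Defs
begin

text \<open>The kernel of \<open>pH\<close> consists of the constant vectors, so for \<open>u, v \<in> V0\<close> the difference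
  \<open>pH u / 2 - pH v / 2\<close> lies in \<open>VP / 2\<close> iff \<open>u - v - w\<close> is constant for some \<open>w \<in> V0\<close>.
  Comparing a coordinate where \<open>w\<close> is \<open>0\<close> with one where it is \<open>1\<close> shows that the constant
  is \<open>0\<close> or \<open>-1\<close>; then \<open>u = v + w\<close> or \<open>v = u + (1 - w)\<close>, i.e. the supports of \<open>u\<close> and \<open>v\<close>
  are strictly nested, and conversely nested supports give \<open>w = u - v\<close> or its complement.
  Every neighbour of \<open>0\<close> has the form \<open>pH u / 2\<close> with \<open>u \<in> V0\<close>, so the cliques through \<open>0\<close>
  are the chains of supports, listed in increasing order. A strict chain of nonempty proper
  subsets of an \<open>(n+1)\<close>-set has at most \<open>n\<close> members, and every clique can be translated so
  that it contains \<open>0\<close>.\<close>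

lemma sorted_wrt_if_sorted_key:
  fixes f :: "'a \<Rightarrow> 'b::linorder"
  assumes "sorted (map f xs)" "distinct xs" "pairwise (\<lambda>x y. R x y \<or> R y x) (set xs)"
    and "\<And>x y. R x y \<Longrightarrow> f x < f y"
  shows "sorted_wrt R xs"
  using assms(1-3)
proof (induction xs)
  case (Cons x xs)
  have "R x y" if "y \<in> set xs" for y
  proof -
    have "R x y \<or> R y x"
      using Cons.prems(2,3) that by (auto simp: pairwise_insert)
    moreover have "f x \<le> f y"
      using Cons.prems(1) that by simp
    ultimately show "R x y"
      using assms(4) by (meson leD)
  qed
  then show ?case
    using Cons by (simp add: pairwise_insert)
qed simp

lemma finite_chain_as_sorted_list:
  fixes f :: "'a \<Rightarrow> 'b::linorder"
  assumes "finite S" "pairwise (\<lambda>x y. R x y \<or> R y x) S" "\<And>x y. R x y \<Longrightarrow> f x < f y"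
  shows "\<exists>xs. distinct xs \<and> set xs = S \<and> sorted_wrt R xs"
proof -
  obtain xs where "set xs = S" "distinct xs"
    using finite_distinct_list[OF assms(1)] by blast
  then show ?thesis
    using sorted_wrt_if_sorted_key[of f "sort_key f xs" R] assms(2,3)
    by (intro exI[of _ "sort_key f xs"]) simp
qed

lemma sorted_wrt_imp_pairwise: "sorted_wrt R xs \<Longrightarrow> pairwise (\<lambda>x y. R x y \<or> R y x) (set xs)"
  by (induction xs) (auto simp: pairwise_insert)

lemma length_strict_chain_less_card:
  fixes As :: "'a::finite set list"
  assumes "sorted_wrt (\<subset>) As" "\<And>A. A \<in> set As \<Longrightarrow> A \<noteq> {} \<and> A \<noteq> UNIV"
  shows "length As < CARD('a)"
proof -
  have "sorted_wrt (<) (map card As)"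
    unfolding sorted_wrt_map by (rule sorted_wrt_mono_rel[OF _ assms(1)]) (simp add: psubset_card_mono)
  then have "length As = card (set (map card As))"
    using distinct_card[of "map card As"] by (simp add: strict_sorted_iff)
  also have "\<dots> \<le> card {1..<CARD('a)}"
  proof (rule card_mono)
    show "set (map card As) \<subseteq> {1..<CARD('a)}"
    proof
      fix m assume "m \<in> set (map card As)"
      then obtain A where A: "A \<in> set As" "m = card A"
        by auto
      then have "0 < card A" "card A < card (UNIV :: 'a set)"
        using assms(2)[OF A(1)] by (auto simp: card_gt_0_iff intro: psubset_card_mono)
      then show "m \<in> {1..<CARD('a)}"
        using A(2) by simp
    qed
  qed simp
  also have "\<dots> < CARD('a)"
    by simp
  finally show ?thesis .
qed

lemma pH_nth: "pH x $ i = x $ i - (\<Sum>j\<in>UNIV. x $ j) / real CARD('n)"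
  for x :: "real^'n"
  by (simp add: pH_def)

lemma pH_diff: "pH (x - y) = pH x - pH y"
  by (simp add: vec_eq_iff pH_nth sum_subtractf diff_divide_distrib)

lemma pH_eq_iff: "pH x = pH y \<longleftrightarrow> (\<exists>c. x - y = (\<chi> i. c))"
  for x y :: "real^'n"
proof
  assume "pH x = pH y"
  then have "pH x $ i = pH y $ i" for i
    by simp
  then have "x $ i - y $ i = (\<Sum>j\<in>UNIV. x $ j) / CARD('n) - (\<Sum>j\<in>UNIV. y $ j) / CARD('n)" for i
    by (simp add: pH_nth algebra_simps)
  then show "\<exists>c. x - y = (\<chi> i. c)"
    by (auto simp: vec_eq_iff)
next
  assume "\<exists>c. x - y = (\<chi> i. c)"
  then obtain c where xi: "\<And>i. x $ i = y $ i + c"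
    by (auto simp: vec_eq_iff algebra_simps)
  then have "(\<Sum>j\<in>UNIV. x $ j) = (\<Sum>j\<in>UNIV. y $ j) + real CARD('n) * c"
    by (simp add: sum.distrib)
  then have "(\<Sum>j\<in>UNIV. x $ j) / CARD('n) = (\<Sum>j\<in>UNIV. y $ j) / CARD('n) + c"
    by (simp add: field_simps)
  then show "pH x = pH y"
    by (simp add: vec_eq_iff pH_nth xi)
qed

lemma pH_zero: "pH 0 = 0"
  by (simp add: pH_def vec_eq_iff)

lemma pH_uminus_eq_pH_complement: "- pH u = pH ((\<chi> i. 1) - u)"
proof -
  have "- pH u = pH (0 - u)"
    by (metis pH_diff pH_zero diff_0)
  also have "\<dots> = pH ((\<chi> i. 1) - u)"
    unfolding pH_eq_iff by (rule exI[of _ "-1"]) (simp add: vec_eq_iff)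
  finally show ?thesis .
qed

lemma V0_iff:
  "u \<in> V0 \<longleftrightarrow> (\<forall>i. u $ i = 0 \<or> u $ i = 1) \<and> (\<exists>i. u $ i = 1) \<and> (\<exists>i. u $ i = 0)"
  for u :: "real^'n"
  by (auto simp: V0_def vec_eq_iff) (metis zero_neq_one)+

lemma V0_integral: "u \<in> V0 \<Longrightarrow> u $ i \<in> \<int>"
  by (auto simp: V0_iff) (metis Ints_0 Ints_1)

lemma complement_in_V0: "u \<in> V0 \<Longrightarrow> (\<chi> i. 1) - u \<in> V0"
  unfolding V0_iff by force

lemma V0_eqI:
  assumes "u \<in> V0" "v \<in> V0" "supp01 u = supp01 v"
  shows "u = v"
proof -
  have "u $ k = 1 \<longleftrightarrow> v $ k = 1" for k
    using assms(3) by (auto simp: supp01_def)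
  then show ?thesis
    using assms(1,2) unfolding V0_iff vec_eq_iff by (metis zero_neq_one)
qed

lemma finite_subset_V0: "S \<subseteq> V0 \<Longrightarrow> finite S"
  by (rule finite_imageD[of supp01]) (auto intro: inj_onI V0_eqI)

lemma length_supp_chain_V0_less_card:
  fixes us :: "(real^'n::finite) list"
  assumes "set us \<subseteq> V0" "sorted_wrt (\<lambda>u v. supp01 u \<subset> supp01 v) us"
  shows "length us < CARD('n)"
proof -
  have "supp01 u \<noteq> {} \<and> supp01 u \<noteq> UNIV" if u: "u \<in> V0" for u :: "real^'n"
  proof -
    obtain i j where "u $ i = 1" "u $ j = 0"
      using u by (auto simp: V0_iff)
    then have "i \<in> supp01 u" "j \<notin> supp01 u"
      by (simp_all add: supp01_def)
    then show ?thesis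
      by blast
  qed
  then show ?thesis
    using length_strict_chain_less_card[of "map supp01 us"] assms by (auto simp: sorted_wrt_map)
qed

lemma diff_in_V0:
  assumes "u \<in> V0" "v \<in> V0" "supp01 v \<subset> supp01 u"
  shows "u - v \<in> V0"
proof -
  have u: "\<And>k. u $ k = 0 \<or> u $ k = 1" and v: "\<And>k. v $ k = 0 \<or> v $ k = 1"
    using assms(1,2) by (auto simp: V0_iff)
  have sub: "v $ k = 1 \<Longrightarrow> u $ k = 1" for k
    using assms(3) by (auto simp: supp01_def)
  obtain j where "u $ j = 1" "v $ j \<noteq> 1"
    using assms(3) by (auto simp: supp01_def)
  then have "(u - v) $ j = 1"
    using v[of j] by simp
  moreover obtain i where "u $ i = 0"
    using assms(1) by (auto simp: V0_iff)
  then have "(u - v) $ i = 0"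
    using v[of i] sub[of i] by auto
  moreover have "(u - v) $ k = 0 \<or> (u - v) $ k = 1" for k
    using u[of k] v[of k] sub[of k] by auto
  ultimately show ?thesis
    unfolding V0_iff by blast
qed

lemma supp01_nested_if_diff_in_V0_mod_const:
  assumes "u \<in> V0" "v \<in> V0" "w \<in> V0" "u - v - w = (\<chi> i. c)"
  shows "supp01 v \<subset> supp01 u \<or> supp01 u \<subset> supp01 v"
proof -
  have e: "\<And>k. u $ k = v $ k + w $ k + c"
    using assms(4) by (simp add: vec_eq_iff algebra_simps)
  have u: "\<And>k. u $ k = 0 \<or> u $ k = 1" and v: "\<And>k. v $ k = 0 \<or> v $ k = 1"
    and w: "\<And>k. w $ k = 0 \<or> w $ k = 1"
    using assms(1-3) by (auto simp: V0_iff)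
  obtain i j where wi: "w $ i = 0" and wj: "w $ j = 1"
    using assms(3) by (auto simp: V0_iff)
  have "c = 0 \<or> c = -1"
    using e[of i] e[of j] wi wj u[of i] v[of i] u[of j] v[of j] by auto
  then show ?thesis
  proof
    assume "c = 0"
    then have "v $ k = 1 \<Longrightarrow> u $ k = 1" for k
      using e[of k] u[of k] w[of k] by auto
    moreover have "u $ j = 1" "v $ j \<noteq> 1"
      using e[of j] u[of j] v[of j] wj \<open>c = 0\<close> by auto
    ultimately show ?thesis
      by (auto simp: supp01_def)
  next
    assume "c = -1"
    then have "u $ k = 1 \<Longrightarrow> v $ k = 1" for k
      using e[of k] v[of k] w[of k] by auto
    moreover have "v $ i = 1" "u $ i \<noteq> 1"
      using e[of i] u[of i] v[of i] wi \<open>c = -1\<close> by auto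
    ultimately show ?thesis
      by (auto simp: supp01_def)
  qed
qed

lemma uminus_in_VP: "v \<in> VP \<Longrightarrow> - v \<in> VP"
  unfolding VP_def using complement_in_V0 pH_uminus_eq_pH_complement by blast

lemma pH_diff_in_VP_iff:
  assumes "u \<in> V0" "v \<in> V0"
  shows "pH u - pH v \<in> VP \<longleftrightarrow> supp01 u \<subset> supp01 v \<or> supp01 v \<subset> supp01 u"
proof
  assume "pH u - pH v \<in> VP"
  then obtain w where "w \<in> V0" "pH (u - v) = pH w"
    by (auto simp: VP_def pH_diff)
  then show "supp01 u \<subset> supp01 v \<or> supp01 v \<subset> supp01 u"
    using supp01_nested_if_diff_in_V0_mod_const assms unfolding pH_eq_iff by blast
next
  have nested: "pH x - pH y \<in> VP" if "x \<in> V0" "y \<in> V0" "supp01 y \<subset> supp01 x"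
    for x y :: "real^'n"
    using diff_in_V0[OF that] by (simp add: VP_def flip: pH_diff)
  assume "supp01 u \<subset> supp01 v \<or> supp01 v \<subset> supp01 u"
  then show "pH u - pH v \<in> VP"
  proof
    assume "supp01 u \<subset> supp01 v"
    then have "pH v - pH u \<in> VP"
      using nested assms by blast
    then show ?thesis
      using uminus_in_VP[of "pH v - pH u"] by simp
  qed (use nested assms in blast)
qed

lemma cayley_adj_iff: "cayley_adj x y \<longleftrightarrow> 2 *\<^sub>R (x - y) \<in> VP"
proof -
  have "x - y = (1/2) *\<^sub>R v \<longleftrightarrow> v = 2 *\<^sub>R (x - y)" for v
    by auto
  then show ?thesis
    by (simp add: cayley_adj_def image_iff)
qed

lemma cayley_adj_sym: "cayley_adj x y \<Longrightarrow> cayley_adj y x"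
proof -
  assume "cayley_adj x y"
  then have "- (2 *\<^sub>R (x - y)) \<in> VP"
    by (simp add: cayley_adj_iff uminus_in_VP)
  then show ?thesis
    by (simp add: cayley_adj_iff scaleR_diff_right)
qed

lemma cayley_adj_translate: "cayley_adj (x - a) (y - a) \<longleftrightarrow> cayley_adj x y"
  by (simp add: cayley_adj_def)

definition half_pH :: "real^'n \<Rightarrow> real^'n" where
  "half_pH u = (1/2) *\<^sub>R pH u"

lemma cayley_adj_half_pH_iff:
  assumes "u \<in> V0" "v \<in> V0"
  shows "cayley_adj (half_pH u) (half_pH v) \<longleftrightarrow> supp01 u \<subset> supp01 v \<or> supp01 v \<subset> supp01 u"
  using pH_diff_in_VP_iff[OF assms]
  by (simp add: cayley_adj_iff half_pH_def flip: scaleR_diff_right)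

lemma cayley_adj_0_iff: "cayley_adj x 0 \<longleftrightarrow> x \<in> half_pH ` V0"
  by (simp add: cayley_adj_def VP_def image_image half_pH_def[abs_def])

lemma inj_on_half_pH_V0: "inj_on half_pH V0"
proof
  fix u v :: "real^'n"
  assume u: "u \<in> V0" and v: "v \<in> V0" and "half_pH u = half_pH v"
  then have "pH u = pH v"
    by (simp add: half_pH_def)
  then obtain c where "u - v = (\<chi> i. c)"
    unfolding pH_eq_iff by blast
  then have e: "\<And>k. u $ k - v $ k = c"
    by (simp add: vec_eq_iff)
  obtain i i' where "u $ i = 1" "u $ i' = 0"
    using u by (auto simp: V0_iff)
  moreover have "v $ i = 0 \<or> v $ i = 1" "v $ i' = 0 \<or> v $ i' = 1"
    using v by (auto simp: V0_iff)
  ultimately have "c = 0"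
    using e[of i] e[of i'] by auto
  then show "u = v"
    using e by (simp add: vec_eq_iff)
qed

lemma half_pH_in_cayley_vertices: "\<forall>i. z $ i \<in> \<int> \<Longrightarrow> half_pH z \<in> cayley_vertices"
  unfolding cayley_vertices_def half_pH_def by blast

lemma diff_in_cayley_vertices:
  assumes "x \<in> cayley_vertices" "y \<in> cayley_vertices"
  shows "x - y \<in> cayley_vertices"
proof -
  obtain z z' where "\<forall>i. z $ i \<in> \<int>" "\<forall>i. z' $ i \<in> \<int>" "x = half_pH z" "y = half_pH z'"
    using assms unfolding cayley_vertices_def half_pH_def by blast
  then show ?thesis
    using half_pH_in_cayley_vertices[of "z - z'"]
    by (simp add: half_pH_def pH_diff scaleR_diff_right)
qed

lemma cayley_clique_translate:
  assumes "cayley_clique C" "a \<in> C"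
  shows "cayley_clique ((\<lambda>x. x - a) ` C)"
proof -
  have "(\<lambda>x. x - a) ` C \<subseteq> cayley_vertices"
    using assms diff_in_cayley_vertices unfolding cayley_clique_def by blast
  moreover have "cayley_adj (x - a) (y - a)" if "x \<in> C" "y \<in> C" "x \<noteq> y" for x y
    using assms(1) that cayley_adj_translate unfolding cayley_clique_def by blast
  ultimately show ?thesis
    unfolding cayley_clique_def by auto
qed

lemma cayley_clique_with_0_eq:
  assumes "cayley_clique C" "0 \<in> C"
  shows "C = insert 0 (half_pH ` {u \<in> V0. half_pH u \<in> C})"
proof -
  have "x \<in> half_pH ` V0" if "x \<in> C" "x \<noteq> 0" for x
    using assms that cayley_adj_0_iff unfolding cayley_clique_def by blast
  then show ?thesis
    using assms(2) by blast
qed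

lemma cayley_clique_insert_0_iff:
  assumes "S \<subseteq> V0"
  shows "cayley_clique (insert 0 (half_pH ` S)) \<longleftrightarrow>
    pairwise (\<lambda>u v. supp01 u \<subset> supp01 v \<or> supp01 v \<subset> supp01 u) S"
proof -
  have "half_pH ` insert 0 S \<subseteq> cayley_vertices"
    using assms V0_integral by (auto intro!: half_pH_in_cayley_vertices)
  then have vertices: "insert 0 (half_pH ` S) \<subseteq> cayley_vertices"
    by (simp add: half_pH_def pH_zero)
  have "cayley_adj x 0 \<and> cayley_adj 0 x" if "x \<in> half_pH ` S" for x
    using that assms cayley_adj_0_iff cayley_adj_sym by blast
  then have "cayley_clique (insert 0 (half_pH ` S)) \<longleftrightarrow> pairwise cayley_adj (half_pH ` S)"
    using vertices by (auto simp: cayley_clique_def pairwise_insert pairwise_def)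
  also have "\<dots> \<longleftrightarrow> pairwise (\<lambda>u v. cayley_adj (half_pH u) (half_pH v)) S"
    using inj_on_subset[OF inj_on_half_pH_V0 assms]
    by (auto simp: pairwise_image pairwise_def inj_on_def)
  also have "\<dots> \<longleftrightarrow> pairwise (\<lambda>u v. supp01 u \<subset> supp01 v \<or> supp01 v \<subset> supp01 u) S"
    using assms by (simp add: pairwise_def cayley_adj_half_pH_iff subset_iff)
  finally show ?thesis .
qed

lemma cayley_clique_with_0_iff:
  fixes C :: "(real^'n::finite) set"
  shows "cayley_clique C \<and> 0 \<in> C \<longleftrightarrow>
    (\<exists>us. distinct us \<and> set us \<subseteq> V0 \<and> sorted_wrt (\<lambda>u v. supp01 u \<subset> supp01 v) us \<and>
      C = insert 0 (half_pH ` set us))"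
proof
  assume C: "cayley_clique C \<and> 0 \<in> C"
  define S where "S = {u \<in> V0. half_pH u \<in> C}"
  have "S \<subseteq> V0" and C_eq: "C = insert 0 (half_pH ` S)"
    using cayley_clique_with_0_eq C by (auto simp: S_def)
  then have chain: "pairwise (\<lambda>u v. supp01 u \<subset> supp01 v \<or> supp01 v \<subset> supp01 u) S"
    using C cayley_clique_insert_0_iff[OF \<open>S \<subseteq> V0\<close>] by simp
  have card_supp_less: "card (supp01 u) < card (supp01 v)" if "supp01 u \<subset> supp01 v"
    for u v :: "real^'n"
    using that by (simp add: psubset_card_mono)
  obtain us where "distinct us" "set us = S" "sorted_wrt (\<lambda>u v. supp01 u \<subset> supp01 v) us"
    using finite_chain_as_sorted_list[of S "\<lambda>u v. supp01 u \<subset> supp01 v" "\<lambda>u. card (supp01 u)"]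
      finite_subset_V0[OF \<open>S \<subseteq> V0\<close>] chain card_supp_less
    by blast
  then show "\<exists>us. distinct us \<and> set us \<subseteq> V0 \<and> sorted_wrt (\<lambda>u v. supp01 u \<subset> supp01 v) us \<and>
      C = insert 0 (half_pH ` set us)"
    using \<open>S \<subseteq> V0\<close> C_eq by blast
next
  assume "\<exists>us. distinct us \<and> set us \<subseteq> V0 \<and> sorted_wrt (\<lambda>u v. supp01 u \<subset> supp01 v) us \<and>
      C = insert 0 (half_pH ` set us)"
  then obtain us where us: "set us \<subseteq> V0" "sorted_wrt (\<lambda>u v. supp01 u \<subset> supp01 v) us"
    "C = insert 0 (half_pH ` set us)"
    by blast
  then show "cayley_clique C \<and> 0 \<in> C"
    using cayley_clique_insert_0_iff[OF us(1)] sorted_wrt_imp_pairwise[OF us(2)] by simp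
qed

lemma cayley_clique_card_le:
  fixes C :: "(real^'n::finite) set"
  assumes "cayley_clique C"
  shows "finite C \<and> card C \<le> CARD('n)"
proof (cases "C = {}")
  case False
  then obtain a where "a \<in> C"
    by blast
  let ?C = "(\<lambda>x. x - a) ` C"
  have "cayley_clique ?C \<and> 0 \<in> ?C"
    using cayley_clique_translate[OF assms \<open>a \<in> C\<close>] \<open>a \<in> C\<close> by auto
  then obtain us where us: "set us \<subseteq> V0" "sorted_wrt (\<lambda>u v. supp01 u \<subset> supp01 v) us"
    "?C = insert 0 (half_pH ` set us)"
    unfolding cayley_clique_with_0_iff by blast
  have inj: "inj_on (\<lambda>x. x - a) C"
    by (simp add: inj_on_def)
  have "finite ?C"
    using us(3) by simp
  then have "finite C"
    using inj finite_imageD by blast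
  have "card C = card ?C"
    using inj by (simp add: card_image)
  also have "\<dots> \<le> Suc (card (half_pH ` set us))"
    unfolding us(3) by (simp add: card_insert_if)
  also have "\<dots> \<le> Suc (length us)"
    using card_image_le[of "set us" half_pH] card_length[of us] by simp
  also have "\<dots> \<le> CARD('n)"
    using length_supp_chain_V0_less_card[OF us(1,2)] by simp
  finally show ?thesis
    using \<open>finite C\<close> by simp
qed simp

theorem lemma11:
  assumes "CARD('n::finite) \<ge> 3"
  shows "(\<forall>C :: (real^'n) set.
            (cayley_clique C \<and> 0 \<in> C) \<longleftrightarrow>
            (\<exists>us. distinct us \<and> set us \<subseteq> V0 \<and>
                  sorted_wrt (\<lambda>u v. supp01 u \<subset> supp01 v) us \<and>
                  C = insert 0 ((\<lambda>u. (1/2) *\<^sub>R pH u) ` set us)))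
       \<and> (\<forall>C :: (real^'n) set. cayley_clique C \<longrightarrow> finite C \<and> card C \<le> CARD('n))"
proof -
  have half_pH_eq: "(\<lambda>u. (1/2) *\<^sub>R pH u) = half_pH"
    by (simp add: half_pH_def[abs_def])
  show ?thesis
    unfolding half_pH_eq using cayley_clique_with_0_iff cayley_clique_card_le by blast
qed

end
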